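(* Let $M=(m_{ij})_{1\le i,j\le 4}$ be an invertible real $4\times 4$ matrix and let $\phi$ be the associated partial map $\mathbb{R}^3\to\mathbb{R}^3$, $$\phi(\lambda_1,\lambda_2,\lambda_3)=\left(\frac{w_1}{w_4},\frac{w_2}{w_4},\frac{w_3}{w_4}\right),\qquad w=M(\lambda_1,\lambda_2,\lambda_3,1)^{T},$$ defined wherever $w_4\neq 0$. Assume: (1) $\phi$ is defined at the origin and $\phi(0)=0$; (2) $\phi$ preserves each of the three coordinate axes, i.e. for each $k\in\{1,2,3\}$, every point of the $k$-th coordinate axis at which $\phi$ is defined is mapped into the $k$-th coordinate axis; (3) $\phi$ is defined on the whole closed half-space $\{(x,y,z)\in\mathbb{R}^3: z\ge 0\}$, i.e. $(M(x,y,z,1)^T)_4\neq 0$ whenever $z\ge 0$; (4) the differential of $\phi$ at the origin is the identity: $d\phi[0;v]=v$ for all $v\in\mathbb{R}^3$. Then there exist $\lambda\in\mathbb{R}\setminus\{0\}$ and $c\ge 0$ such that $$M=\lambda\begin{pmatrix}1&0&0&0\\0&1&0&0\\0&0&1&0\\0&0&c&1\end{pmatrix},$$ so that $\phi(x,y,z)=\left(\frac{x}{cz+1},\frac{y}{cz+1},\frac{z}{cz+1}\right)$.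
   Context: Points of $\mathbb{R}^3$ are written $(x,y,z)$; the $z$-axis is interpreted as the direction in which the subject is looking. Any invertible $4\times4$ matrix induces a projective transformation of $P_3(\mathbb{R})$, and $M$ and $\lambda M$ ($\lambda\ne0$) induce the same transformation; $\phi$ above is its expression in the affine chart where the fourth homogeneous coordinate equals $1$. *)

theory Defs
  imports "HOL-Analysis.Analysis"
begin

definition homog :: "real^3 \<Rightarrow> real^4" where
  "homog p = (\<chi> i. if i = 1 then p$1 else if i = 2 then p$2 else if i = 3 then p$3 else 1)"

definition hw :: "real^4^4 \<Rightarrow> real^3 \<Rightarrow> real^4" where
  "hw M p = M *v homog p"

definition phi_defined :: "real^4^4 \<Rightarrow> real^3 \<Rightarrow> bool" where
  "phi_defined M p \<longleftrightarrow> hw M p $ 4 \<noteq> 0"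

definition phi :: "real^4^4 \<Rightarrow> real^3 \<Rightarrow> real^3" where
  "phi M p = (let w = hw M p in
     (\<chi> i. if i = 1 then w$1 / w$4 else if i = 2 then w$2 / w$4 else w$3 / w$4))"

definition perspM :: "real \<Rightarrow> real^4^4" where
  "perspM c = (\<chi> i j. if i = j then 1 else if i = 4 \<and> j = 3 then c else 0)"

end

theory Submission
  imports Defs
begin

text \<open>All conditions are read off entry by entry, after writing the coordinates of \<open>\<phi>\<close> as
  quotients of affine functions. Fixing the origin kills the translation part of the last
  column and forces \<open>m\<^sub>4\<^sub>4 \<noteq> 0\<close>; mapping the point \<open>e\<^sub>k\<close> into the \<open>k\<close>-th axis kills the
  off-diagonal entries of the upper-left block; along the \<open>k\<close>-th axis \<open>\<phi>\<^sub>k\<close> is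
  \<open>m\<^sub>k\<^sub>k t / (m\<^sub>4\<^sub>k t + m\<^sub>4\<^sub>4)\<close>, whose slope \<open>m\<^sub>k\<^sub>k / m\<^sub>4\<^sub>4\<close> at 0 must be 1. Finally the
  denominator \<open>m\<^sub>4\<^sub>1 x + m\<^sub>4\<^sub>2 y + m\<^sub>4\<^sub>3 z + m\<^sub>4\<^sub>4\<close> has no zero on \<open>z \<ge> 0\<close>, which forces
  \<open>m\<^sub>4\<^sub>1 = m\<^sub>4\<^sub>2 = 0\<close> and \<open>m\<^sub>4\<^sub>3 / m\<^sub>4\<^sub>4 \<ge> 0\<close>.\<close>

lemma hw_nth: "hw M p $ i = M$i$1 * p$1 + M$i$2 * p$2 + M$i$3 * p$3 + M$i$4"
  unfolding hw_def matrix_vector_mult_def homog_def by (simp add: sum_4)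

lemma phi_nth:
  "phi M p $ 1 = hw M p $ 1 / hw M p $ 4"
  "phi M p $ 2 = hw M p $ 2 / hw M p $ 4"
  "phi M p $ 3 = hw M p $ 3 / hw M p $ 4"
  unfolding phi_def Let_def by simp_all

lemma has_real_derivative_axis_component:
  fixes f :: "real^'n \<Rightarrow> real^'n"
  assumes "(f has_derivative id) (at 0)"
  shows "((\<lambda>t. f (axis k t) $ k) has_real_derivative 1) (at 0)"
proof -
  \<comment> \<open>Only usable right to left: as a rewrite rule it loops on \<open>axis k 1\<close>.\<close>
  have axis_scale: "axis k t = t *\<^sub>R axis k 1" for t :: real
    by (simp add: vec_eq_iff axis_def)
  have "((\<lambda>t. t *\<^sub>R axis k (1::real)) has_derivative (\<lambda>t. t *\<^sub>R axis k 1)) (at 0)"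
    by (rule bounded_linear_imp_has_derivative[OF bounded_linear_scaleR_left])
  moreover have "(f has_derivative id) (at (0 *\<^sub>R axis k 1))"
    using assms by simp
  ultimately have "((\<lambda>t. f (t *\<^sub>R axis k 1)) has_derivative (\<lambda>t. t *\<^sub>R axis k 1)) (at 0)"
    by (auto dest: diff_chain_at simp: o_def)
  then have "((\<lambda>t. f (t *\<^sub>R axis k 1) $ k) has_derivative (\<lambda>t. (t *\<^sub>R axis k 1) $ k)) (at 0)"
    by (rule bounded_linear.has_derivative[OF bounded_linear_vec_nth])
  moreover have "(\<lambda>t. (t *\<^sub>R axis k 1) $ k) = (*) (1::real)"
    by (simp add: fun_eq_iff axis_def)
  moreover have "(\<lambda>t. f (axis k t) $ k) = (\<lambda>t. f (t *\<^sub>R axis k 1) $ k)"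
    by (simp only: axis_scale[symmetric])
  ultimately show ?thesis
    by (simp only: has_field_derivative_def)
qed

lemma has_real_derivative_linear_fractional_at_0:
  fixes a b e :: real
  assumes "e \<noteq> 0"
  shows "((\<lambda>t. a * t / (b * t + e)) has_real_derivative a / e) (at 0)"
proof -
  have "((\<lambda>t. a * t / (b * t + e)) has_real_derivative
          (a * (b * 0 + e) - a * 0 * b) / ((b * 0 + e) * (b * 0 + e))) (at 0)"
    using assms by (auto intro!: derivative_eq_intros)
  then show ?thesis
    using assms by (simp add: field_simps)
qed

lemma affine_nonzero_on_reals_imp_const:
  fixes a b :: real
  assumes "\<And>x. a * x + b \<noteq> 0"
  shows "a = 0"
  using assms[of "- b / a"] by (cases "a = 0") (auto simp: field_simps)

lemma affine_nonzero_on_halfline_imp_nonneg: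
  fixes a b :: real
  assumes "\<And>x. x \<ge> 0 \<Longrightarrow> a * x + b \<noteq> 0"
  shows "a * b \<ge> 0"
proof (rule ccontr)
  assume "\<not> a * b \<ge> 0"
  then have "a \<noteq> 0" and ab: "a * b < 0"
    by auto
  have "- b / a = - (a * b) / a\<^sup>2"
    using \<open>a \<noteq> 0\<close> by (simp add: power2_eq_square)
  with ab have "- b / a \<ge> 0"
    by (simp add: divide_nonpos_nonneg)
  then show False
    using assms[of "- b / a"] \<open>a \<noteq> 0\<close> by simp
qed

lemma phi_fixes_0_imp_last_column:
  assumes "phi_defined M 0" and "phi M 0 = 0"
  shows "M$4$4 \<noteq> 0" "M$1$4 = 0" "M$2$4 = 0" "M$3$4 = 0"
proof -
  show e: "M$4$4 \<noteq> 0"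
    using assms(1) by (simp add: phi_defined_def hw_nth)
  show "M$1$4 = 0" "M$2$4 = 0" "M$3$4 = 0"
    using arg_cong[OF assms(2), of "\<lambda>v. v$1"] arg_cong[OF assms(2), of "\<lambda>v. v$2"]
      arg_cong[OF assms(2), of "\<lambda>v. v$3"] e
    by (simp_all add: phi_nth hw_nth)
qed

lemma phi_preserves_axes_imp_off_diagonal:
  assumes last_column: "M$1$4 = 0" "M$2$4 = 0" "M$3$4 = 0"
    and defined: "\<And>k::3. phi_defined M (axis k 1)"
    and axes: "\<And>k::3. \<exists>s. phi M (axis k 1) = axis k s"
  shows "M$2$1 = 0" "M$3$1 = 0" "M$1$2 = 0" "M$3$2 = 0" "M$1$3 = 0" "M$2$3 = 0"
proof -
  obtain s1 s2 s3 where s1: "phi M (axis 1 1) = axis 1 s1"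
    and s2: "phi M (axis 2 1) = axis 2 s2" and s3: "phi M (axis 3 1) = axis 3 s3"
    using axes by metis
  have w: "hw M (axis 1 1) $ 4 \<noteq> 0" "hw M (axis 2 1) $ 4 \<noteq> 0" "hw M (axis 3 1) $ 4 \<noteq> 0"
    using defined by (simp_all add: phi_defined_def)
  show "M$2$1 = 0" "M$3$1 = 0"
    using arg_cong[OF s1, of "\<lambda>v. v$2"] arg_cong[OF s1, of "\<lambda>v. v$3"] w last_column
    by (simp_all add: phi_nth hw_nth axis_def)
  show "M$1$2 = 0" "M$3$2 = 0"
    using arg_cong[OF s2, of "\<lambda>v. v$1"] arg_cong[OF s2, of "\<lambda>v. v$3"] w last_column
    by (simp_all add: phi_nth hw_nth axis_def)
  show "M$1$3 = 0" "M$2$3 = 0"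
    using arg_cong[OF s3, of "\<lambda>v. v$1"] arg_cong[OF s3, of "\<lambda>v. v$2"] w last_column
    by (simp_all add: phi_nth hw_nth axis_def)
qed

lemma phi_derivative_id_imp_diagonal:
  assumes diff: "(phi M has_derivative id) (at 0)"
    and e: "M$4$4 \<noteq> 0"
    and zero: "M$1$4 = 0" "M$2$4 = 0" "M$3$4 = 0"
      "M$2$1 = 0" "M$3$1 = 0" "M$1$2 = 0" "M$3$2 = 0" "M$1$3 = 0" "M$2$3 = 0"
  shows "M$1$1 = M$4$4" "M$2$2 = M$4$4" "M$3$3 = M$4$4"
proof -
  have slope: "a = M$4$4"
    if "((\<lambda>t. a * t / (b * t + M$4$4)) has_real_derivative 1) (at 0)" for a b
    using DERIV_unique[OF that has_real_derivative_linear_fractional_at_0[OF e]] e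
    by (simp add: field_simps)
  have "(\<lambda>t. phi M (axis 1 t) $ 1) = (\<lambda>t. M$1$1 * t / (M$4$1 * t + M$4$4))"
    and "(\<lambda>t. phi M (axis 2 t) $ 2) = (\<lambda>t. M$2$2 * t / (M$4$2 * t + M$4$4))"
    and "(\<lambda>t. phi M (axis 3 t) $ 3) = (\<lambda>t. M$3$3 * t / (M$4$3 * t + M$4$4))"
    using zero by (simp_all add: fun_eq_iff phi_nth hw_nth axis_def)
  then show "M$1$1 = M$4$4" "M$2$2 = M$4$4" "M$3$3 = M$4$4"
    using has_real_derivative_axis_component[OF diff, of 1] has_real_derivative_axis_component[OF diff, of 2]
      has_real_derivative_axis_component[OF diff, of 3]
    by (simp_all add: slope)
qed

lemma phi_defined_on_halfspace_imp_last_row: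
  assumes "\<And>p::real^3. p$3 \<ge> 0 \<Longrightarrow> phi_defined M p"
  shows "M$4$1 = 0" "M$4$2 = 0" "M$4$3 * M$4$4 \<ge> 0"
proof -
  define pt :: "real \<Rightarrow> real \<Rightarrow> real \<Rightarrow> real^3"
    where "pt x y z = (\<chi> i. if i = 1 then x else if i = 2 then y else z)" for x y z
  have w: "M$4$1 * x + M$4$2 * y + M$4$3 * z + M$4$4 \<noteq> 0" if "z \<ge> 0" for x y z
    using assms[of "pt x y z"] that by (simp add: pt_def phi_defined_def hw_nth)
  show "M$4$1 = 0"
    by (rule affine_nonzero_on_reals_imp_const[where b = "M$4$4"]) (use w[where y = 0 and z = 0] in simp)
  show "M$4$2 = 0"
    by (rule affine_nonzero_on_reals_imp_const[where b = "M$4$4"]) (use w[where x = 0 and z = 0] in simp)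
  show "M$4$3 * M$4$4 \<ge> 0"
    by (rule affine_nonzero_on_halfline_imp_nonneg) (use w[where x = 0 and y = 0] in simp)
qed

theorem mainTheorem1:
  fixes M :: "real^4^4"
  assumes inv: "invertible M"
    and def0: "phi_defined M 0" and fix0: "phi M 0 = 0"
    and axes: "\<And>(k::3) t. phi_defined M (axis k t) \<Longrightarrow> (\<exists>s. phi M (axis k t) = axis k s)"
    and halfspace: "\<And>p::real^3. p$3 \<ge> 0 \<Longrightarrow> phi_defined M p"
    and diff: "(phi M has_derivative id) (at 0)"
  shows "\<exists>l c. l \<noteq> 0 \<and> c \<ge> 0 \<and> M = l *\<^sub>R perspM c"
proof -
  note last_column = phi_fixes_0_imp_last_column[OF def0 fix0]
  have on_axes: "phi_defined M (axis k 1)" for k :: 3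
    by (rule halfspace) (simp add: axis_def)
  note off_diagonal =
    phi_preserves_axes_imp_off_diagonal[OF last_column(2-4) on_axes axes[OF on_axes]]
  note diagonal = phi_derivative_id_imp_diagonal[OF diff last_column off_diagonal]
  note last_row = phi_defined_on_halfspace_imp_last_row[OF halfspace]
  let ?l = "M$4$4" and ?c = "M$4$3 / M$4$4"
  have "?c \<ge> 0"
    using last_row(3) last_column(1) zero_le_divide_iff zero_le_mult_iff by blast
  moreover have "M = ?l *\<^sub>R perspM ?c"
    using last_column last_row off_diagonal diagonal
    by (simp add: vec_eq_iff perspM_def forall_4)
  ultimately show ?thesis
    using last_column(1) by blast
qed

end
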